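(* Let $e_1,\dots,e_p\in\mathbb{C}^m$ and $f_1,\dots,f_p\in\mathbb{C}^n$ be unit vectors with $[e_1]=[e_2]=\cdots=[e_p]$. Then the face $F$ of $S$ generated by the states $\{\omega_{e_i\otimes f_i}:1\le i\le p\}$ is also a face of $K$; namely it is the face of $K$ associated with the subspace $L=e_1\otimes\operatorname{Span}\{f_1,\dots,f_p\}$ of $\mathbb{C}^m\otimes\mathbb{C}^n$, and $F$ is affinely isomorphic to the state space of $\mathcal{B}(L)$.
   Context: $\mathcal{B}(\mathbb{C}^m\otimes\mathbb{C}^n)$ is identified with $\mathcal{B}(\mathbb{C}^m)\otimes\mathcal{B}(\mathbb{C}^n)$. $K$ denotes the state space of $\mathcal{B}(\mathbb{C}^m\otimes\mathbb{C}^n)$ and $S\subseteq K$ the convex set of separable states, i.e. convex combinations of product states $\omega\otimes\sigma$; equivalently, convex combinations of pure product states $\omega_{x\otimes y}$ ($x\in\mathbb{C}^m$, $y\in\mathbb{C}^n$ unit vectors), where $\omega_z(A)=(Az,z)$. $[x]$ denotes the line spanned by $x$. The face of a convex set generated by a subset is the smallest face containing it. The face of $K$ associated with a subspace $M$ of $\mathbb{C}^m\otimes\mathbb{C}^n$ with projection $Q$ is $\{\omega\in K:\omega(Q)=1\}$, the convex hull of vector states $\omega_z$, $z\in M$ a unit vector. *)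

theory Defs
  imports "HOL-Analysis.Analysis" "HOL-Library.Function_Algebras"
begin

text \<open>Pointwise real vector space structure on functions (used to form convex
  combinations of linear functionals, i.e. of states).\<close>

instantiation "fun" :: (type, real_vector) real_vector
begin
definition scaleR_fun :: "real \<Rightarrow> ('a \<Rightarrow> 'b) \<Rightarrow> 'a \<Rightarrow> 'b"
  where "scaleR_fun r f = (\<lambda>x. r *\<^sub>R f x)"
instance
  by standard (auto simp: scaleR_fun_def fun_eq_iff algebra_simps plus_fun_def)
end

text \<open>Complex inner product (linear in the first argument): (x,y) = sum x_i conj(y_i).\<close>
definition cinner :: "complex^'k \<Rightarrow> complex^'k \<Rightarrow> complex" where
  "cinner x y = (\<Sum>i\<in>UNIV. x$i * cnj (y$i))"

definition cline :: "complex^'k \<Rightarrow> (complex^'k) set" where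
  "cline x = range (\<lambda>c. c *s x)"

definition cspan :: "(complex^'k) set \<Rightarrow> (complex^'k) set" where
  "cspan S = {(\<Sum>v\<in>T. c v *s v) | T c. finite T \<and> T \<subseteq> S}"

text \<open>C^m \<otimes> C^n is identified with C^(m \<times> n); B(C^m \<otimes> C^n) with matrices.\<close>
definition tensor :: "complex^'m \<Rightarrow> complex^'n \<Rightarrow> complex^('m \<times> 'n)" where
  "tensor x y = (\<chi> ij. x$(fst ij) * y$(snd ij))"

definition cadj :: "complex^'k^'k \<Rightarrow> complex^'k^'k" where
  "cadj A = (\<chi> i j. cnj (A$j$i))"

definition cmat_smult :: "complex \<Rightarrow> complex^'k^'k \<Rightarrow> complex^'k^'k" where
  "cmat_smult c A = (\<chi> i j. c * A$i$j)"

definition is_state :: "(complex^'k^'k \<Rightarrow> complex) \<Rightarrow> bool" where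
  "is_state \<omega> \<longleftrightarrow>
     (\<forall>A B. \<omega> (A + B) = \<omega> A + \<omega> B) \<and>
     (\<forall>c A. \<omega> (cmat_smult c A) = c * \<omega> A) \<and>
     (\<forall>A. \<omega> (cadj A ** A) \<in> \<real> \<and> 0 \<le> Re (\<omega> (cadj A ** A))) \<and>
     \<omega> (mat 1) = 1"

definition state_space :: "(complex^'k^'k \<Rightarrow> complex) set" where
  "state_space = {\<omega>. is_state \<omega>}"

definition vstate :: "complex^'k \<Rightarrow> complex^'k^'k \<Rightarrow> complex" where
  "vstate z = (\<lambda>A. cinner (A *v z) z)"

definition sep_states :: "(complex^('m::finite \<times> 'n::finite)^('m \<times> 'n) \<Rightarrow> complex) set" where
  "sep_states = convex hull
     {vstate (tensor (x::complex^'m::finite) (y::complex^'n::finite)) | x y. norm x = 1 \<and> norm y = 1}"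

definition face_generated :: "'a::real_vector set \<Rightarrow> 'a set \<Rightarrow> 'a set" where
  "face_generated X C = \<Inter>{G. G face_of C \<and> X \<subseteq> G}"

definition is_orth_proj :: "complex^'k^'k \<Rightarrow> (complex^'k) set \<Rightarrow> bool" where
  "is_orth_proj Q M \<longleftrightarrow> cadj Q = Q \<and> Q ** Q = Q \<and> range (\<lambda>v. Q *v v) = M"

text \<open>B(L) for a subspace L of C^k: linear operators on L, represented by maps
  vanishing outside L (so that each operator has a unique representative).\<close>
definition bounded_ops_on :: "(complex^'k) set \<Rightarrow> (complex^'k \<Rightarrow> complex^'k) set" where
  "bounded_ops_on L = {T. (\<forall>x\<in>L. T x \<in> L) \<and>
      (\<forall>x\<in>L. \<forall>y\<in>L. T (x + y) = T x + T y) \<and>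
      (\<forall>c. \<forall>x\<in>L. T (c *s x) = c *s T x) \<and>
      (\<forall>x. x \<notin> L \<longrightarrow> T x = 0)}"

definition id_on :: "(complex^'k) set \<Rightarrow> complex^'k \<Rightarrow> complex^'k" where
  "id_on L = (\<lambda>x. if x \<in> L then x else 0)"

text \<open>States of B(L): complex-linear functionals on B(L), with phi(T* T) \<ge> 0
  (T* the adjoint of T on L), phi(1_L) = 1; extended by 0 outside B(L).\<close>
definition is_state_on :: "(complex^'k) set \<Rightarrow> ((complex^'k \<Rightarrow> complex^'k) \<Rightarrow> complex) \<Rightarrow> bool" where
  "is_state_on L \<phi> \<longleftrightarrow>
     (\<forall>T\<in>bounded_ops_on L. \<forall>S\<in>bounded_ops_on L. \<phi> (\<lambda>x. T x + S x) = \<phi> T + \<phi> S) \<and>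
     (\<forall>c. \<forall>T\<in>bounded_ops_on L. \<phi> (\<lambda>x. c *s T x) = c * \<phi> T) \<and>
     (\<forall>T\<in>bounded_ops_on L. \<forall>S\<in>bounded_ops_on L.
         (\<forall>x\<in>L. \<forall>y\<in>L. cinner (T x) y = cinner x (S y)) \<longrightarrow>
         \<phi> (S \<circ> T) \<in> \<real> \<and> 0 \<le> Re (\<phi> (S \<circ> T))) \<and>
     \<phi> (id_on L) = 1 \<and>
     (\<forall>T. T \<notin> bounded_ops_on L \<longrightarrow> \<phi> T = 0)"

definition state_space_on :: "(complex^'k) set \<Rightarrow> ((complex^'k \<Rightarrow> complex^'k) \<Rightarrow> complex) set" where
  "state_space_on L = {\<phi>. is_state_on L \<phi>}"

definition affinely_isomorphic :: "'a::real_vector set \<Rightarrow> 'b::real_vector set \<Rightarrow> bool" where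
  "affinely_isomorphic A B \<longleftrightarrow> (\<exists>\<Phi>. bij_betw \<Phi> A B \<and>
     (\<forall>x\<in>A. \<forall>y\<in>A. \<forall>t\<in>{0..1}.
        \<Phi> ((1 - t) *\<^sub>R x + t *\<^sub>R y) = (1 - t) *\<^sub>R \<Phi> x + t *\<^sub>R \<Phi> y))"

end

(* Let L = e_1 (x) span{f_1,...,f_p} and Q the orthogonal projection onto L.  The proof
   shows that the face F generated in S is F_Q = {omega in K. omega(Q) = 1}:

   1. Every positive functional on matrices is a finite sum of vector functionals
      omega_z (a Cholesky-type elimination, one coordinate at a time), so a state
      omega lies in F_Q iff all its vectors z lie in L.
   2. F_Q is a face of K, and compression A |-> QAQ identifies F_Q with the state
      space of B(L) (an affine bijection).
   3. Since every vector of L is a product vector e_1 (x) y, F_Q consists of separable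
      states, hence is a face of S containing the generators.
   4. Conversely every omega in F_Q is dominated by a multiple of the barycentre
      omega_0 of the generators, so omega_0 is a proper convex combination of omega
      and another element of F_Q; any face of S containing omega_0 therefore contains
      omega.  Hence F_Q is the smallest face of S containing the generators. *)

theory Submission
  imports Defs "HOL-Library.Complex_Order"
begin

lemma sum_fun_apply: "(sum F A :: 'a \<Rightarrow> 'b::real_vector) x = (\<Sum>a\<in>A. F a x)"
  by (induction A rule: infinite_finite_induct) auto

lemma scaleR_fun_apply [simp]: "(r *\<^sub>R f) x = r *\<^sub>R f x"
  by (simp add: scaleR_fun_def)

(* In the (partial) order on complex numbers, 0 \<le> c means that c is a nonnegative real;
   this is exactly the positivity condition in the definition of a state. *)

lemma nonneg_complex_iff: "0 \<le> (c::complex) \<longleftrightarrow> Im c = 0 \<and> 0 \<le> Re c"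
  by (auto simp: less_eq_complex_def)

lemma nonneg_complex_iff_Real: "0 \<le> (c::complex) \<longleftrightarrow> c \<in> \<real> \<and> 0 \<le> Re c"
  by (auto simp: nonneg_complex_iff complex_is_Real_iff)

lemma cinner_add_left: "cinner (x + y) z = cinner x z + cinner y z"
  by (simp add: cinner_def sum.distrib distrib_right)
lemma cinner_diff_left: "cinner (x - y) z = cinner x z - cinner y z"
  by (simp add: cinner_def sum_subtractf left_diff_distrib)
lemma cinner_diff_right: "cinner x (y - z) = cinner x y - cinner x z"
  by (simp add: cinner_def sum_subtractf right_diff_distrib)
lemma cinner_scale_left: "cinner (c *s x) y = c * cinner x y"
  by (simp add: cinner_def sum_distrib_left mult.assoc)
lemma cinner_scale_right: "cinner x (c *s y) = cnj c * cinner x y"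
  by (simp add: cinner_def sum_distrib_left mult_ac)
lemma cinner_zero_left [simp]: "cinner 0 y = 0"
  by (simp add: cinner_def)
lemma cinner_commute: "cinner y x = cnj (cinner x y)"
  by (simp add: cinner_def mult.commute)

lemma cinner_self: "cinner x x = of_real ((norm x)\<^sup>2)"
proof -
  have "(norm x)\<^sup>2 = (\<Sum>i\<in>UNIV. (cmod (x$i))\<^sup>2)"
    by (simp add: norm_vec_def L2_set_def sum_nonneg)
  then have "of_real ((norm x)\<^sup>2) = (\<Sum>i\<in>UNIV. complex_of_real ((cmod (x$i))\<^sup>2))"
    by simp
  also have "\<dots> = (\<Sum>i\<in>UNIV. x$i * cnj (x$i))"
    by (rule sum.cong) (auto simp only: complex_norm_square)
  finally show ?thesis by (simp add: cinner_def)
qed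

lemma cinner_self_eq_0: "cinner x x = 0 \<longleftrightarrow> x = 0"
  by (simp add: cinner_self)

lemma inner_cinner: "x \<bullet> y = Re (cinner x y)"
  by (simp add: inner_vec_def cinner_def inner_complex_def Re_sum)

lemma axis_one_nth: "axis i (1::complex) $ j = (if j = i then 1 else 0)"
  by (simp add: axis_def)
lemma cnj_axis_one_nth: "cnj (axis i (1::complex) $ j) = (if j = i then 1 else 0)"
  by (simp add: axis_def)
lemma if_zero_mult: "(if P then u else 0) * (v::complex) = (if P then u * v else 0)"
  by simp
lemma mult_if_zero: "(v::complex) * (if P then u else 0) = (if P then v * u else 0)"
  by simp
lemma cnj_if_zero: "cnj (if P then u else 0) = (if P then cnj u else 0)"
  by simp
lemmas if_zero_simps = if_zero_mult mult_if_zero cnj_if_zero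

lemma cinner_axis_left [simp]: "cinner (axis i 1) v = cnj (v$i)"
  by (simp add: cinner_def axis_one_nth if_zero_simps)
lemma cinner_axis_right [simp]: "cinner v (axis i 1) = v$i"
  by (simp add: cinner_def cnj_axis_one_nth if_zero_simps)

lemma vec_eq_cinner: "(\<And>x. cinner x u = cinner x v) \<Longrightarrow> u = v"
  by (metis cinner_axis_left complex_cnj_cancel_iff vec_eq_iff)

lemma norm_cscale: "norm (c *s (x::complex^'k)) = cmod c * norm x"
proof -
  have "cinner (c *s x) (c *s x) = (c * cnj c) * cinner x x"
    by (simp add: cinner_scale_left cinner_scale_right mult_ac)
  then have "complex_of_real ((norm (c *s x))\<^sup>2) = of_real ((cmod c)\<^sup>2) * of_real ((norm x)\<^sup>2)"
    by (simp only: cinner_self complex_norm_square[symmetric])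
  then have "(norm (c *s x))\<^sup>2 = (cmod c * norm x)\<^sup>2"
    by (metis of_real_eq_iff of_real_mult power_mult_distrib)
  then show ?thesis by (simp add: power2_eq_iff_nonneg)
qed

definition outer :: "complex^'k \<Rightarrow> complex^'k \<Rightarrow> complex^'k^'k" where
  "outer x y = (\<chi> a b. x$a * cnj (y$b))"

abbreviation unit_outer :: "'k \<Rightarrow> 'k \<Rightarrow> complex^'k^'k::finite" ("E") where
  "E i j \<equiv> outer (axis i 1) (axis j 1)"

lemma cinner_adj: "cinner (A *v x) y = cinner x (cadj A *v y)"
  unfolding cinner_def cadj_def matrix_vector_mult_def
  by (simp add: sum_distrib_left sum_distrib_right mult_ac) (rule sum.swap)

lemma mat_eq_cinner: "(\<And>x y. cinner x (A *v y) = cinner x (B *v y)) \<Longrightarrow> A = B"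
  by (metis matrix_eq vec_eq_cinner)

lemma cadj_cadj [simp]: "cadj (cadj A) = A"
  by (simp add: cadj_def vec_eq_iff)
lemma cadj_diff: "cadj (A - B) = cadj A - cadj B"
  by (simp add: cadj_def vec_eq_iff)
lemma cadj_one [simp]: "cadj (mat 1) = mat 1"
  by (simp add: cadj_def mat_def vec_eq_iff)

lemma cmat_smult_mv: "cmat_smult c A *v x = c *s (A *v x)"
  by (simp add: cmat_smult_def matrix_vector_mult_def vec_eq_iff sum_distrib_left mult.assoc)

lemma cmat_smult_one [simp]: "cmat_smult 1 M = M"
  by (simp add: cmat_smult_def vec_eq_iff)

lemma mv_scale: "(A::complex^'a^'b) *v (c *s x) = c *s (A *v x)"
  unfolding matrix_vector_mult_def vec_eq_iff
  by (auto simp: sum_distrib_left mult_ac intro!: sum.cong)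
lemma mv_sum: "(A::complex^'a^'b) *v sum g S = (\<Sum>s\<in>S. A *v g s)"
  by (induction S rule: infinite_finite_induct) (auto simp: matrix_vector_right_distrib)

lemma outer_mv: "outer x y *v z = cinner z y *s x"
  by (simp add: outer_def matrix_vector_mult_def cinner_def vec_eq_iff sum_distrib_left mult_ac)
lemma cadj_outer: "cadj (outer x y) = outer y x"
  by (simp add: cadj_def outer_def vec_eq_iff mult.commute)
lemma outer_mult: "outer a b ** outer c d = cmat_smult (cinner c b) (outer a d)"
  by (simp add: outer_def matrix_matrix_mult_def cmat_smult_def cinner_def vec_eq_iff
      sum_distrib_left sum_distrib_right mult_ac)

lemma outer_self_adj: "outer x x = cadj (outer (axis k 1) x) ** outer (axis k 1) x"
  by (simp add: cadj_outer outer_mult)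

lemma cadj_mult_self_sum: "cadj A ** A = (\<Sum>k\<in>UNIV. outer (\<chi> i. cnj (A$k$i)) (\<chi> i. cnj (A$k$i)))"
  by (simp add: cadj_def outer_def matrix_matrix_mult_def vec_eq_iff sum_component)

lemma mat_expand: "M = (\<Sum>i\<in>UNIV. \<Sum>j\<in>UNIV. cmat_smult (M$i$j) (E i j))"
  by (simp add: vec_eq_iff sum_component cmat_smult_def outer_def axis_one_nth cnj_axis_one_nth
      if_zero_simps)

lemma outer_expand: "outer (x + c *s y) (x + c *s y) =
   outer x x + cmat_smult (cnj c) (outer x y) + cmat_smult c (outer y x) + cmat_smult (c * cnj c) (outer y y)"
  by (simp add: outer_def cmat_smult_def vec_eq_iff algebra_simps)

definition lin_functional :: "(complex^'k^'k \<Rightarrow> complex) \<Rightarrow> bool" where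
  "lin_functional \<omega> \<longleftrightarrow> (\<forall>A B. \<omega> (A + B) = \<omega> A + \<omega> B) \<and> (\<forall>c A. \<omega> (cmat_smult c A) = c * \<omega> A)"

definition pos_functional :: "(complex^'k^'k \<Rightarrow> complex) \<Rightarrow> bool" where
  "pos_functional \<omega> \<longleftrightarrow> (\<forall>A. 0 \<le> \<omega> (cadj A ** A))"

lemma is_state_iff: "is_state \<omega> \<longleftrightarrow> lin_functional \<omega> \<and> pos_functional \<omega> \<and> \<omega> (mat 1) = 1"
  by (auto simp: is_state_def lin_functional_def pos_functional_def nonneg_complex_iff_Real)

lemma lin_add: "lin_functional \<omega> \<Longrightarrow> \<omega> (A + B) = \<omega> A + \<omega> B"
  by (simp add: lin_functional_def)
lemma lin_smult: "lin_functional \<omega> \<Longrightarrow> \<omega> (cmat_smult c A) = c * \<omega> A"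
  by (simp add: lin_functional_def)
lemma lin_zero: "lin_functional \<omega> \<Longrightarrow> \<omega> 0 = 0"
  using lin_add[of \<omega> 0 0] by simp
lemma lin_diff: "lin_functional \<omega> \<Longrightarrow> \<omega> (A - B) = \<omega> A - \<omega> B"
  using lin_add[of \<omega> "A - B" B] by simp
lemma lin_sum: "lin_functional \<omega> \<Longrightarrow> \<omega> (sum G S) = (\<Sum>s\<in>S. \<omega> (G s))"
  by (induction S rule: infinite_finite_induct) (auto simp: lin_zero lin_add)

lemma lin_comb: "lin_functional \<omega> \<Longrightarrow> lin_functional \<omega>' \<Longrightarrow> lin_functional (a *\<^sub>R \<omega> + b *\<^sub>R \<omega>')"
  unfolding lin_functional_def by (simp add: scaleR_conv_of_real algebra_simps)

lemma lin_entries: "lin_functional \<omega> \<Longrightarrow> \<omega> M = (\<Sum>i\<in>UNIV. \<Sum>j\<in>UNIV. M$i$j * \<omega> (E i j))"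
  by (subst mat_expand) (simp add: lin_sum lin_smult)

lemma lin_outer_axis: "lin_functional \<omega> \<Longrightarrow> \<omega> (outer x (axis a 1)) = (\<Sum>i\<in>UNIV. x$i * \<omega> (E i a))"
  by (subst lin_entries, assumption) (simp add: outer_def cnj_axis_one_nth if_zero_simps)

lemma pos_iff_outer: "lin_functional \<omega> \<Longrightarrow> pos_functional \<omega> \<longleftrightarrow> (\<forall>x. 0 \<le> \<omega> (outer x x))"
proof
  assume "pos_functional \<omega>"
  then show "\<forall>x. 0 \<le> \<omega> (outer x x)"
    unfolding pos_functional_def by (metis outer_self_adj)
next
  assume l: "lin_functional \<omega>" and h: "\<forall>x. 0 \<le> \<omega> (outer x x)"
  show "pos_functional \<omega>" unfolding pos_functional_def
  proof
    fix A :: "complex^'a^'a"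
    show "0 \<le> \<omega> (cadj A ** A)"
      by (subst cadj_mult_self_sum) (simp add: lin_sum[OF l] sum_nonneg h)
  qed
qed

lemma lin_vstate: "lin_functional (vstate z)"
  by (simp add: lin_functional_def vstate_def matrix_vector_mult_add_rdistrib cinner_add_left
      cmat_smult_mv cinner_scale_left)

lemma vstate_outer: "vstate z (outer x y) = cinner z y * cinner x z"
  by (simp add: vstate_def outer_mv cinner_scale_left)

lemma vstate_adj: "vstate z (cadj A ** A) = of_real ((norm (A *v z))\<^sup>2)"
proof -
  have "vstate z (cadj A ** A) = cinner (cadj A *v (A *v z)) z"
    by (simp add: vstate_def matrix_vector_mul_assoc)
  also have "\<dots> = cinner (A *v z) (A *v z)"
    using cinner_adj[of "cadj A" "A *v z" z] by simp
  finally show ?thesis by (simp add: cinner_self)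
qed

lemma pos_vstate: "pos_functional (vstate z)"
  by (simp add: pos_functional_def vstate_adj nonneg_complex_iff del: of_real_power)

lemma vstate_one: "vstate z (mat 1) = of_real ((norm z)\<^sup>2)"
  by (simp add: vstate_def cinner_self)

lemma vstate_state: "norm z = 1 \<Longrightarrow> is_state (vstate z)"
  by (simp add: is_state_iff lin_vstate pos_vstate vstate_one)

lemma vstate_scale: "vstate (c *s w) M = (c * cnj c) * vstate w M"
  by (simp add: vstate_def mv_scale cinner_scale_left cinner_scale_right mult_ac)

definition vstate_sum :: "(complex^'k) list \<Rightarrow> complex^'k^'k \<Rightarrow> complex" where
  "vstate_sum zs M = (\<Sum>z\<leftarrow>zs. vstate z M)"

lemma of_real_sum_list: "(\<Sum>z\<leftarrow>zs. complex_of_real (g z)) = of_real (\<Sum>z\<leftarrow>zs. g z)"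
  by (induction zs) auto

lemma vstate_sum_adj: "vstate_sum zs (cadj A ** A) = of_real (\<Sum>z\<leftarrow>zs. (norm (A *v z))\<^sup>2)"
  by (simp only: vstate_sum_def vstate_adj of_real_sum_list)

lemma pos_outer_expand: "lin_functional \<omega> \<Longrightarrow> \<omega> (outer (x + c *s y) (x + c *s y)) =
   \<omega> (outer x x) + cnj c * \<omega> (outer x y) + c * \<omega> (outer y x) + c * cnj c * \<omega> (outer y y)"
  by (simp add: outer_expand lin_add lin_smult)

lemma pos_hermitian:
  assumes l: "lin_functional \<omega>" and p: "pos_functional \<omega>"
  shows "\<omega> (outer y x) = cnj (\<omega> (outer x y))"
proof -
  have nq: "\<And>v. 0 \<le> \<omega> (outer v v)" using pos_iff_outer[OF l] p by blast
  have "Im (\<omega> (outer x y) + \<omega> (outer y x)) = 0"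
    using nq[of "x + 1 *s y"] nq[of x] nq[of y]
    unfolding pos_outer_expand[OF l] by (simp add: nonneg_complex_iff)
  moreover have "Re (\<omega> (outer y x)) - Re (\<omega> (outer x y)) = 0"
    using nq[of "x + \<i> *s y"] nq[of x] nq[of y]
    unfolding pos_outer_expand[OF l] by (simp add: nonneg_complex_iff)
  ultimately show ?thesis by (simp add: complex_eq_iff)
qed

lemma quadratic_nonneg_discriminant:
  fixes A B C :: real
  assumes h: "\<And>s. 0 \<le> A - 2 * s * B + s\<^sup>2 * C" and C: "0 \<le> C"
  shows "B\<^sup>2 \<le> A * C"
proof (cases "C > 0")
  case True
  have "0 \<le> A - 2 * (B / C) * B + (B / C)\<^sup>2 * C" by (rule h)
  also have "\<dots> = A - B\<^sup>2 / C" using True by (simp add: power2_eq_square field_simps)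
  finally show ?thesis using True by (simp add: field_simps)
next
  case False
  then have C0: "C = 0" using C by simp
  have "B = 0"
  proof (rule ccontr)
    assume "B \<noteq> 0"
    have "0 \<le> A - 2 * ((A + 1) / (2 * B)) * B + ((A + 1) / (2 * B))\<^sup>2 * C" by (rule h)
    also have "\<dots> = -1" using \<open>B \<noteq> 0\<close> C0 by (simp add: field_simps)
    finally show False by simp
  qed
  then show ?thesis using h[of 0] C0 by simp
qed

lemma pos_cauchy_schwarz:
  assumes l: "lin_functional \<omega>" and p: "pos_functional \<omega>"
  shows "(cmod (\<omega> (outer x y)))\<^sup>2 \<le> Re (\<omega> (outer x x)) * Re (\<omega> (outer y y))"
proof -
  have nq: "\<And>v. 0 \<le> \<omega> (outer v v)" using pos_iff_outer[OF l] p by blast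
  define a where "a = \<omega> (outer x y)"
  define N where "N = (cmod a)\<^sup>2"
  have hb: "\<omega> (outer y x) = cnj a" unfolding a_def by (rule pos_hermitian[OF l p])
  have aa: "cnj a * a = of_real N" "a * cnj a = of_real N"
    unfolding N_def by (metis complex_norm_square mult.commute)+
  (* Positivity along the real line x - s a y. *)
  have key: "0 \<le> Re (\<omega> (outer x x)) - 2 * s * N + s\<^sup>2 * (N * Re (\<omega> (outer y y)))" for s :: real
  proof -
    define c where "c = - of_real s * a"
    have "cnj c * a = - of_real (s * N)" "c * cnj a = - of_real (s * N)"
      "c * cnj c = of_real (s\<^sup>2 * N)"
      by (simp_all add: c_def mult.assoc aa[symmetric] mult_ac power2_eq_square)
    moreover have "0 \<le> \<omega> (outer x x) + cnj c * a + c * cnj a + c * cnj c * \<omega> (outer y y)"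
      using nq[of "x + c *s y"] unfolding pos_outer_expand[OF l] a_def[symmetric] hb .
    ultimately show ?thesis by (simp add: nonneg_complex_iff mult_ac)
  qed
  have "0 \<le> N * Re (\<omega> (outer y y))" using nq[of y] by (simp add: N_def nonneg_complex_iff)
  from quadratic_nonneg_discriminant[OF key this]
  have ineq: "N * N \<le> N * (Re (\<omega> (outer x x)) * Re (\<omega> (outer y y)))"
    by (simp add: power2_eq_square mult_ac)
  show ?thesis
  proof (cases "a = 0")
    case True
    then show ?thesis using nq[of x] nq[of y] by (simp add: nonneg_complex_iff a_def[symmetric])
  next
    case False
    then have "0 < N" by (simp add: N_def)
    with ineq have "N \<le> Re (\<omega> (outer x x)) * Re (\<omega> (outer y y))"
      by (metis mult_le_cancel_left_pos)
    then show ?thesis unfolding N_def a_def .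
  qed
qed

(* Decomposition of a positive functional into vector functionals, by eliminating
   one coordinate at a time.  If omega(E a a) = 0, Cauchy-Schwarz kills row and
   column a; otherwise subtracting omega_z with z_j = omega(E a j)/sqrt(omega(E a a))
   keeps positivity and kills row and column a. *)

lemma pos_zero_diagonal:
  assumes l: "lin_functional \<omega>" and p: "pos_functional \<omega>" and d: "Re (\<omega> (E a a)) = 0"
  shows "\<omega> (E a j) = 0" "\<omega> (E j a) = 0"
  using pos_cauchy_schwarz[OF l p, of "axis a 1" "axis j 1"]
    pos_cauchy_schwarz[OF l p, of "axis j 1" "axis a 1"] d by simp_all

lemma pos_subtract_vstate:
  assumes l: "lin_functional \<omega>" and p: "pos_functional \<omega>"
    and dpos: "0 < d" and d: "d = Re (\<omega> (E a a))"
  defines "z \<equiv> (\<chi> j. \<omega> (E a j) / of_real (sqrt d))"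
  defines "\<omega>' \<equiv> (\<lambda>M. \<omega> M - vstate z M)"
  shows "lin_functional \<omega>'" "pos_functional \<omega>'" "z \<noteq> 0"
    "\<And>i j. \<omega>' (E i j) = \<omega> (E i j) - \<omega> (E a j) * \<omega> (E i a) / of_real d"
    "\<And>j. \<omega>' (E a j) = 0" "\<And>i. \<omega>' (E i a) = 0"
proof -
  have nq: "\<And>v. 0 \<le> \<omega> (outer v v)" using pos_iff_outer[OF l] p by blast
  have daa: "\<omega> (E a a) = of_real d"
    using nq[of "axis a 1"] unfolding d by (simp add: nonneg_complex_iff complex_eq_iff)
  have hE: "cnj (\<omega> (E i j)) = \<omega> (E j i)" for i j
    using pos_hermitian[OF l p, of "axis i 1" "axis j 1"] by simp
  have sqrt_sq: "of_real (sqrt d) * of_real (sqrt d) = (of_real d :: complex)"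
    using dpos by (simp flip: of_real_mult)
  show l': "lin_functional \<omega>'"
    using l lin_vstate[of z] unfolding lin_functional_def \<omega>'_def by (simp add: algebra_simps)
  show entries: "\<omega>' (E i j) = \<omega> (E i j) - \<omega> (E a j) * \<omega> (E i a) / of_real d" for i j
  proof -
    have "vstate z (E i j) = \<omega> (E a j) * cnj (\<omega> (E a i)) / (of_real (sqrt d) * of_real (sqrt d))"
      by (simp add: vstate_outer z_def)
    also have "\<dots> = \<omega> (E a j) * \<omega> (E i a) / of_real d"
      by (simp only: hE sqrt_sq)
    finally show ?thesis by (simp add: \<omega>'_def)
  qed
  show "\<omega>' (E a j) = 0" "\<omega>' (E i a) = 0" for i j
    unfolding entries using daa dpos by simp_all
  have "z $ a \<noteq> 0" using daa dpos by (simp add: z_def)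
  then show "z \<noteq> 0" by auto
  (* cinner x z is omega(|x><e_a|)/sqrt d, so positivity of omega' is Cauchy-Schwarz. *)
  have cz: "cinner x z = \<omega> (outer x (axis a 1)) / of_real (sqrt d)" for x
  proof -
    have "cinner x z = (\<Sum>j\<in>UNIV. x$j * cnj (\<omega> (E a j)) / of_real (sqrt d))"
      by (simp add: cinner_def z_def)
    also have "\<dots> = (\<Sum>j\<in>UNIV. x$j * \<omega> (E j a) / of_real (sqrt d))"
      by (simp only: hE)
    finally show ?thesis by (subst lin_outer_axis[OF l]) (simp add: sum_divide_distrib)
  qed
  show "pos_functional \<omega>'"
  proof (subst pos_iff_outer[OF l'], intro allI)
    fix x
    define w where "w = \<omega> (outer x (axis a 1))"
    have "cnj (cinner x z) * cinner x z = of_real ((cmod (cinner x z))\<^sup>2)"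
      by (metis complex_norm_square mult.commute)
    also have "(cmod (cinner x z))\<^sup>2 = (cmod w)\<^sup>2 / d"
      using dpos by (simp add: cz w_def norm_divide power_divide)
    finally have e: "\<omega>' (outer x x) = \<omega> (outer x x) - of_real ((cmod w)\<^sup>2 / d)"
      by (simp add: \<omega>'_def vstate_outer cinner_commute[of z x])
    have "(cmod w)\<^sup>2 \<le> Re (\<omega> (outer x x)) * d"
      using pos_cauchy_schwarz[OF l p, of x "axis a 1"] unfolding w_def d .
    then have "(cmod w)\<^sup>2 / d \<le> Re (\<omega> (outer x x))"
      using dpos by (simp add: divide_le_eq)
    then show "0 \<le> \<omega>' (outer x x)" using nq[of x] unfolding e by (simp add: nonneg_complex_iff)
  qed
qed

lemma pos_vstate_decomposition_on:
  assumes "finite I" and "lin_functional \<omega>" and "pos_functional \<omega>"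
    and "\<forall>i j. i \<notin> I \<or> j \<notin> I \<longrightarrow> \<omega> (E i j) = 0"
  shows "\<exists>zs. (\<forall>z\<in>set zs. z \<noteq> 0) \<and> \<omega> = vstate_sum zs"
  using assms
proof (induction I arbitrary: \<omega> rule: finite_induct)
  case empty
  have "\<omega> M = 0" for M by (subst lin_entries[OF empty(1)]) (simp add: empty(3))
  then show ?case by (intro exI[of _ "[]"]) (auto simp: vstate_sum_def)
next
  case (insert a I \<omega>)
  note l = insert(4) and p = insert(5) and supp = insert(6)
  define d where "d = Re (\<omega> (E a a))"
  have "0 \<le> d" using pos_iff_outer[OF l] p unfolding d_def by (simp add: nonneg_complex_iff)
  then consider "d = 0" | "0 < d" by linarith
  then show ?case
  proof cases
    case 1
    have "\<omega> (E i j) = 0" if "i \<notin> I \<or> j \<notin> I" for i j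
      using that supp[rule_format, of i j] pos_zero_diagonal[OF l p, of a j]
        pos_zero_diagonal[OF l p, of a i] 1
      by (cases "i = a"; cases "j = a") (auto simp: d_def)
    then have "\<forall>i j. i \<notin> I \<or> j \<notin> I \<longrightarrow> \<omega> (E i j) = 0" by blast
    then show ?thesis using insert.IH[OF l p] by blast
  next
    case 2
    define z :: "complex^'a" where "z = (\<chi> j. \<omega> (E a j) / of_real (sqrt d))"
    define \<omega>' where "\<omega>' = (\<lambda>M. \<omega> M - vstate z M)"
    have sub: "lin_functional \<omega>'" "pos_functional \<omega>'" "z \<noteq> 0"
      "\<And>i j. \<omega>' (E i j) = \<omega> (E i j) - \<omega> (E a j) * \<omega> (E i a) / of_real d"
      "\<And>j. \<omega>' (E a j) = 0" "\<And>i. \<omega>' (E i a) = 0"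
      unfolding \<omega>'_def z_def by (rule pos_subtract_vstate[OF l p 2 d_def])+
    have "\<omega>' (E i j) = 0" if "i \<notin> I \<or> j \<notin> I" for i j
    proof (cases "i = a \<or> j = a")
      case True
      then show ?thesis using sub(5,6) by auto
    next
      case False
      then show ?thesis
        using that supp[rule_format, of i j] supp[rule_format, of a j] supp[rule_format, of i a]
        by (auto simp: sub(4))
    qed
    then have "\<forall>i j. i \<notin> I \<or> j \<notin> I \<longrightarrow> \<omega>' (E i j) = 0" by blast
    then obtain zs where zs: "\<forall>z\<in>set zs. z \<noteq> 0" "\<omega>' = vstate_sum zs"
      using insert.IH[OF sub(1,2)] by blast
    have "\<omega> M = vstate_sum (z # zs) M" for M
      using fun_cong[OF zs(2), of M] by (simp add: \<omega>'_def vstate_sum_def diff_eq_eq add.commute)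
    then have "\<omega> = vstate_sum (z # zs)" by (rule ext)
    moreover have "\<forall>z'\<in>set (z # zs). z' \<noteq> 0" using zs(1) sub(3) by simp
    ultimately show ?thesis by blast
  qed
qed

theorem pos_vstate_decomposition:
  fixes \<omega> :: "complex^'k::finite^'k \<Rightarrow> complex"
  assumes "lin_functional \<omega>" "pos_functional \<omega>"
  obtains zs where "\<forall>z\<in>set zs. z \<noteq> 0" "\<omega> = vstate_sum zs"
proof -
  have "\<exists>zs. (\<forall>z\<in>set zs. z \<noteq> 0) \<and> \<omega> = vstate_sum zs"
    by (rule pos_vstate_decomposition_on) (use assms in auto)
  then show thesis using that by blast
qed

lemma convex_state_space: "convex (state_space :: (complex^'k::finite^'k \<Rightarrow> complex) set)"
  unfolding convex_def state_space_def
proof (intro ballI allI impI, simp)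
  fix x y :: "complex^'k^'k \<Rightarrow> complex" and u v :: real
  assume x: "is_state x" and y: "is_state y" and uv: "0 \<le> u" "0 \<le> v" "u + v = 1"
  have "lin_functional (u *\<^sub>R x + v *\<^sub>R y)"
    using lin_comb x y by (auto simp: is_state_iff)
  moreover have "pos_functional (u *\<^sub>R x + v *\<^sub>R y)"
    using x y uv unfolding is_state_iff pos_functional_def
    by (simp add: add_nonneg_nonneg scaleR_nonneg_nonneg)
  moreover have "(u *\<^sub>R x + v *\<^sub>R y) (mat 1) = 1"
    using x y uv by (simp add: is_state_iff scaleR_conv_of_real flip: distrib_right of_real_add)
  ultimately show "is_state (u *\<^sub>R x + v *\<^sub>R y)" by (simp add: is_state_iff)
qed

definition csubspace :: "(complex^'k) set \<Rightarrow> bool" where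
  "csubspace V \<longleftrightarrow> 0 \<in> V \<and> (\<forall>x\<in>V. \<forall>y\<in>V. x + y \<in> V) \<and> (\<forall>c. \<forall>x\<in>V. c *s x \<in> V)"

lemma scaleR_vec_cscale: "c *\<^sub>R (x::complex^'k) = complex_of_real c *s x"
  unfolding vec_eq_iff vector_scaleR_component vector_smult_component by (simp add: scaleR_conv_of_real)

lemma csubspace_subspace: "csubspace V \<Longrightarrow> subspace V"
  by (simp add: csubspace_def subspace_def scaleR_vec_cscale)

lemma csubspace_sum: "csubspace V \<Longrightarrow> (\<And>s. s \<in> S \<Longrightarrow> g s \<in> V) \<Longrightarrow> sum g S \<in> V"
  by (induction S rule: infinite_finite_induct) (auto simp: csubspace_def)

lemma vec_axis_expand: "(x::complex^'k) = (\<Sum>b\<in>UNIV. (x$b) *s axis b 1)"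
  by (simp add: vec_eq_iff sum_component axis_one_nth if_zero_simps)

(* Orthogonal decomposition x = y + (x - y), y \<in> V, x - y \<perp> V, obtained from the real
   decomposition: a complex subspace is closed under multiplication by i, so real
   orthogonality to V already gives complex orthogonality. *)
lemma csubspace_orthogonal_decomposition:
  assumes V: "csubspace V"
  shows "\<exists>y\<in>V. \<forall>w\<in>V. cinner (x - y) w = 0"
proof -
  have spanV: "span V = V" using csubspace_subspace[OF V] by (simp add: span_eq_iff)
  obtain y z where yz: "y \<in> span V" "\<And>w. w \<in> span V \<Longrightarrow> orthogonal z w" "x = y + z"
    using orthogonal_subspace_decomp_exists[of V x] by blast
  have "cinner (x - y) w = 0" if w: "w \<in> V" for w
  proof -
    have iw: "\<i> *s w \<in> V" using V w by (simp add: csubspace_def)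
    have "Re (cinner z w) = 0" using yz(2)[of w] w spanV by (simp add: orthogonal_def inner_cinner)
    moreover have "Re (cinner z (\<i> *s w)) = 0"
      using yz(2)[of "\<i> *s w"] iw spanV by (simp add: orthogonal_def inner_cinner)
    then have "Im (cinner z w) = 0" by (simp add: cinner_scale_right)
    ultimately show ?thesis using yz(3) by (simp add: complex_eq_iff)
  qed
  then show ?thesis using yz(1) spanV by auto
qed

lemma csubspace_orthogonal_unique:
  assumes V: "csubspace V" and "y \<in> V" "y' \<in> V"
    and "\<forall>w\<in>V. cinner (x - y) w = 0" "\<forall>w\<in>V. cinner (x - y') w = 0"
  shows "y = y'"
proof -
  have d: "y' - y \<in> V"
    using assms(2,3) subspace_diff[OF csubspace_subspace[OF V]] by blast
  have "cinner (y' - y) (y' - y) = cinner ((x - y) - (x - y')) (y' - y)"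
    by (simp add: algebra_simps)
  also have "\<dots> = 0" using assms(4,5) d by (simp add: cinner_diff_left)
  finally show ?thesis by (simp add: cinner_self_eq_0)
qed

theorem orthogonal_projection_exists:
  fixes V :: "(complex^'k::finite) set"
  assumes V: "csubspace V"
  obtains Q where "cadj Q = Q" "Q ** Q = Q" "\<And>v. Q *v v \<in> V" "\<And>v. v \<in> V \<Longrightarrow> Q *v v = v"
proof -
  define P where "P x = (SOME y. y \<in> V \<and> (\<forall>w\<in>V. cinner (x - y) w = 0))" for x
  have P: "P x \<in> V" "\<forall>w\<in>V. cinner (x - P x) w = 0" for x
    using someI_ex[OF csubspace_orthogonal_decomposition[OF V, of x, unfolded Bex_def]]
    unfolding P_def[symmetric] by auto
  have P_eqI: "P x = y" if "y \<in> V" "\<forall>w\<in>V. cinner (x - y) w = 0" for x y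
    using csubspace_orthogonal_unique[OF V P(1) that(1) P(2) that(2)] .
  have P_fix: "v \<in> V \<Longrightarrow> P v = v" for v by (rule P_eqI) auto
  have P_add: "P (x + y) = P x + P y" for x y
  proof (rule P_eqI)
    show "P x + P y \<in> V" using V P(1) by (simp add: csubspace_def)
    have "x + y - (P x + P y) = (x - P x) + (y - P y)" by simp
    then have "cinner (x + y - (P x + P y)) w = cinner (x - P x) w + cinner (y - P y) w" for w
      by (simp only: cinner_add_left)
    then show "\<forall>w\<in>V. cinner (x + y - (P x + P y)) w = 0"
      using P(2) by simp
  qed
  have P_scale: "P (c *s x) = c *s P x" for c x
  proof (rule P_eqI)
    show "c *s P x \<in> V" using V P(1) by (simp add: csubspace_def)
    have "c *s x - c *s P x = c *s (x - P x)" by (simp add: vector_ssub_ldistrib)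
    then have "cinner (c *s x - c *s P x) w = c * cinner (x - P x) w" for w
      by (simp only: cinner_scale_left)
    then show "\<forall>w\<in>V. cinner (c *s x - c *s P x) w = 0"
      using P(2) by simp
  qed
  have P_sum: "P (sum g S) = (\<Sum>s\<in>S. P (g s))" for g and S :: "'b set"
    by (induction S rule: infinite_finite_induct) (auto simp: P_add P_scale[of 0 0, simplified])
  define Q :: "complex^'k^'k" where "Q = (\<chi> a b. (P (axis b 1))$a)"
  have Qv: "Q *v x = P x" for x
  proof -
    have "P x = P (\<Sum>b\<in>UNIV. (x$b) *s axis b 1)"
      by (simp only: vec_axis_expand[of x, symmetric])
    also have "\<dots> = (\<Sum>b\<in>UNIV. (x$b) *s P (axis b 1))"
      by (simp add: P_sum P_scale)
    also have "\<dots> = Q *v x"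
      by (simp add: Q_def matrix_vector_mult_def vec_eq_iff sum_component mult.commute)
    finally show ?thesis by simp
  qed
  have P_selfadj: "cinner (P x) y = cinner x (P y)" for x y
  proof -
    have "cinner (P x) (y - P y) = 0" using P(2)[of y] P(1)[of x]
      by (metis cinner_commute complex_cnj_zero)
    moreover have "cinner (x - P x) (P y) = 0" using P(2)[of x] P(1)[of y] by blast
    ultimately show ?thesis by (simp add: cinner_diff_left cinner_diff_right)
  qed
  show ?thesis
  proof
    show "cadj Q = Q"
      by (rule mat_eq_cinner) (simp only: cinner_adj[symmetric] Qv P_selfadj)
    show "Q ** Q = Q"
      by (simp add: matrix_eq matrix_vector_mul_assoc[symmetric] Qv P_fix P(1))
    show "\<And>v. v \<in> V \<Longrightarrow> Q *v v = v" by (simp add: Qv P_fix)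
    show "\<And>v. Q *v v \<in> V" by (simp add: Qv P(1))
  qed
qed

locale subspace_projection =
  fixes L :: "(complex^'k::finite) set" and Q :: "complex^'k^'k"
  assumes csub: "csubspace L" and Q_adj: "cadj Q = Q" and Q_idem: "Q ** Q = Q"
    and Q_in: "\<And>v. Q *v v \<in> L" and Q_fix: "\<And>v. v \<in> L \<Longrightarrow> Q *v v = v"
begin

lemma L_zero: "0 \<in> L" using csub by (simp add: csubspace_def)
lemma L_add: "x \<in> L \<Longrightarrow> y \<in> L \<Longrightarrow> x + y \<in> L" using csub by (simp add: csubspace_def)
lemma L_scale: "x \<in> L \<Longrightarrow> c *s x \<in> L" using csub by (simp add: csubspace_def)

lemma Q_selfadj: "cinner (Q *v x) y = cinner x (Q *v y)"
  using cinner_adj[of Q x y] Q_adj by simp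

lemma Q_Q_mv: "Q *v (Q *v x) = Q *v x"
  by (simp add: matrix_vector_mul_assoc Q_idem)

lemma compl_proj_adj: "cadj (mat 1 - Q) ** (mat 1 - Q) = mat 1 - Q"
proof -
  have "(mat 1 - Q) ** (mat 1 - Q) = mat 1 - Q"
    unfolding matrix_eq
    by (simp add: matrix_vector_mul_assoc[symmetric] matrix_vector_mult_diff_rdistrib
        matrix_vector_mult_diff_distrib Q_Q_mv)
  then show ?thesis by (simp add: cadj_diff Q_adj)
qed

(* Q and 1 - Q are both of the form A* A, so 0 \<le> omega(Q) \<le> 1 for every state. *)
lemma state_Q_bounds:
  assumes s: "is_state \<omega>"
  shows "Im (\<omega> Q) = 0" "0 \<le> Re (\<omega> Q)" "Re (\<omega> Q) \<le> 1"
proof -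
  have l: "lin_functional \<omega>" and p: "pos_functional \<omega>" and o: "\<omega> (mat 1) = 1"
    using s by (auto simp: is_state_iff)
  have "0 \<le> \<omega> (mat 1 - Q)" using p compl_proj_adj unfolding pos_functional_def by metis
  moreover have "0 \<le> \<omega> Q" using p Q_adj Q_idem unfolding pos_functional_def by metis
  moreover have "\<omega> (mat 1 - Q) = 1 - \<omega> Q" by (simp add: lin_diff[OF l] o)
  ultimately show "Im (\<omega> Q) = 0" "0 \<le> Re (\<omega> Q)" "Re (\<omega> Q) \<le> 1"
    by (auto simp: nonneg_complex_iff)
qed

definition proj_face :: "(complex^'k^'k \<Rightarrow> complex) set" where
  "proj_face = {\<omega> \<in> state_space. \<omega> Q = 1}"

lemma proj_face_state: "\<omega> \<in> proj_face \<Longrightarrow> is_state \<omega>"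
  by (simp add: proj_face_def state_space_def)

(* A state lies in F_Q iff its vector decomposition only uses vectors of L:
   omega(1 - Q) = 0 forces (1 - Q) z = 0 for every z. *)
lemma proj_face_vstate_sum:
  assumes w: "\<omega> \<in> proj_face"
  obtains zs where "\<forall>z\<in>set zs. z \<noteq> 0 \<and> z \<in> L" "\<omega> = vstate_sum zs"
proof -
  have s: "is_state \<omega>" and q: "\<omega> Q = 1" using w by (auto simp: proj_face_def state_space_def)
  then have l: "lin_functional \<omega>" and p: "pos_functional \<omega>" and o: "\<omega> (mat 1) = 1"
    by (auto simp: is_state_iff)
  obtain zs where zs: "\<forall>z\<in>set zs. z \<noteq> 0" "\<omega> = vstate_sum zs"
    using pos_vstate_decomposition[OF l p] by blast
  define X where "X = mat 1 - Q"
  have "cadj X ** X = X" unfolding X_def by (rule compl_proj_adj)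
  moreover have "\<omega> X = 0" by (simp add: X_def lin_diff[OF l] o q)
  ultimately have "of_real (\<Sum>z\<leftarrow>zs. (norm (X *v z))\<^sup>2) = (0::complex)"
    using zs(2) vstate_sum_adj[of zs X] by simp
  then have "\<forall>r\<in>set (map (\<lambda>z. (norm (X *v z))\<^sup>2) zs). r = 0"
    by (subst sum_list_nonneg_eq_0_iff[symmetric]) auto
  then have "z \<in> L" if "z \<in> set zs" for z
    using that Q_in[of z] by (auto simp: X_def matrix_vector_mult_diff_rdistrib)
  then show ?thesis using zs that by blast
qed

lemma proj_face_face: "proj_face face_of state_space"
  unfolding face_of_def
proof (intro conjI ballI impI)
  show "proj_face \<subseteq> state_space" by (auto simp: proj_face_def)
  show "convex proj_face"
    unfolding convex_def
  proof (intro ballI allI impI)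
    fix x y :: "complex^'k^'k \<Rightarrow> complex" and u v :: real
    assume xy: "x \<in> proj_face" "y \<in> proj_face" and uv: "0 \<le> u" "0 \<le> v" "u + v = 1"
    have "u *\<^sub>R x + v *\<^sub>R y \<in> state_space"
      using convex_state_space xy uv unfolding convex_def proj_face_def by blast
    moreover have "(u *\<^sub>R x + v *\<^sub>R y) Q = 1"
      using xy uv by (simp add: proj_face_def scaleR_conv_of_real flip: distrib_right of_real_add)
    ultimately show "u *\<^sub>R x + v *\<^sub>R y \<in> proj_face" by (simp add: proj_face_def)
  qed
  (* omega(Q) = 1 is the maximal value of omega(Q), hence an extreme condition. *)
  fix a b x
  assume a: "a \<in> state_space" and b: "b \<in> state_space" and x: "x \<in> proj_face"
    and seg: "x \<in> open_segment a b"
  obtain u where u: "0 < u" "u < 1" "x = (1 - u) *\<^sub>R a + u *\<^sub>R b"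
    using seg by (auto simp: in_segment)
  have sa: "is_state a" and sb: "is_state b" using a b by (auto simp: state_space_def)
  have "(1 - u) *\<^sub>R a Q + u *\<^sub>R b Q = 1"
    using x u(3) by (simp add: proj_face_def)
  then have "Re ((1 - u) *\<^sub>R a Q + u *\<^sub>R b Q) = 1" by simp
  then have "(1 - u) * (1 - Re (a Q)) + u * (1 - Re (b Q)) = 0"
    by (simp add: algebra_simps)
  moreover have "0 \<le> (1 - u) * (1 - Re (a Q))" "0 \<le> u * (1 - Re (b Q))"
    using state_Q_bounds[OF sa] state_Q_bounds[OF sb] u(1,2) by simp_all
  ultimately have "(1 - u) * (1 - Re (a Q)) = 0" "u * (1 - Re (b Q)) = 0" by linarith+
  then have "Re (a Q) = 1" "Re (b Q) = 1" using u(1,2) by simp_all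
  then have "a Q = 1" "b Q = 1"
    using state_Q_bounds[OF sa] state_Q_bounds[OF sb] by (auto simp: complex_eq_iff)
  then show "a \<in> proj_face" "b \<in> proj_face" using a b by (simp_all add: proj_face_def)
qed

lemma proj_face_compress:
  assumes w: "\<omega> \<in> proj_face"
  shows "\<omega> (Q ** A ** Q) = \<omega> A"
proof -
  obtain zs where zs: "\<forall>z\<in>set zs. z \<noteq> 0 \<and> z \<in> L" "\<omega> = vstate_sum zs"
    using proj_face_vstate_sum[OF w] by blast
  have compress: "vstate z (Q ** A ** Q) = vstate z A" if "z \<in> L" for z
  proof -
    have "(Q ** A ** Q) *v z = Q *v (A *v (Q *v z))"
      by (simp add: matrix_vector_mul_assoc matrix_mul_assoc)
    then have "vstate z (Q ** A ** Q) = cinner (Q *v (A *v (Q *v z))) z"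
      by (simp add: vstate_def)
    also have "\<dots> = cinner (A *v z) z" using that by (simp add: Q_selfadj Q_fix)
    finally show ?thesis by (simp add: vstate_def)
  qed
  have "map (\<lambda>z. vstate z (Q ** A ** Q)) zs = map (\<lambda>z. vstate z A) zs"
    using compress zs(1) by (intro map_cong refl) blast
  then have "(\<Sum>z\<leftarrow>zs. vstate z (Q ** A ** Q)) = (\<Sum>z\<leftarrow>zs. vstate z A)"
    by (rule arg_cong)
  then show ?thesis by (simp only: zs(2) vstate_sum_def)
qed

end

(* An operator T on L corresponds to the matrix
   op_matrix T = T Q, a matrix A to its compression x \<mapsto> Q A x on L; a state of
   F_Q is transported along op_matrix, a state of B(L) along the compression.  The two
   maps are mutually inverse because states of F_Q only see QAQ. *)

context subspace_projection
begin

lemma L_sum: "(\<And>s. s \<in> S \<Longrightarrow> g s \<in> L) \<Longrightarrow> sum g S \<in> L"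
  by (rule csubspace_sum[OF csub])

lemma is_orth_proj: "is_orth_proj Q L"
  using Q_in Q_fix unfolding is_orth_proj_def by (auto simp: Q_adj Q_idem image_iff) metis

abbreviation ops_L :: "(complex^'k \<Rightarrow> complex^'k) set" where
  "ops_L \<equiv> bounded_ops_on L"

lemma ops_L_D:
  assumes "T \<in> ops_L"
  shows "\<And>x. x \<in> L \<Longrightarrow> T x \<in> L" "\<And>x y. x \<in> L \<Longrightarrow> y \<in> L \<Longrightarrow> T (x + y) = T x + T y"
    "\<And>c x. x \<in> L \<Longrightarrow> T (c *s x) = c *s T x" "\<And>x. x \<notin> L \<Longrightarrow> T x = 0"
  using assms by (auto simp: bounded_ops_on_def)

lemma ops_L_sum: "T \<in> ops_L \<Longrightarrow> (\<And>s. s \<in> S \<Longrightarrow> g s \<in> L) \<Longrightarrow> T (sum g S) = (\<Sum>s\<in>S. T (g s))"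
proof (induction S rule: infinite_finite_induct)
  case (insert x F)
  have "sum g F \<in> L" using insert by (auto intro: L_sum)
  then show ?case using insert ops_L_D(2)[of T "g x" "sum g F"] by auto
qed (use ops_L_D(3)[of T 0 0] L_zero in auto)

lemma ops_L_add: "T \<in> ops_L \<Longrightarrow> S \<in> ops_L \<Longrightarrow> (\<lambda>x. T x + S x) \<in> ops_L"
  unfolding bounded_ops_on_def by (auto simp: L_add vector_sadd_rdistrib vector_add_ldistrib)

lemma ops_L_scale: "T \<in> ops_L \<Longrightarrow> (\<lambda>x. c *s T x) \<in> ops_L"
  unfolding bounded_ops_on_def by (auto simp: L_scale vector_smult_assoc mult.commute)

lemma id_on_ops_L: "id_on L \<in> ops_L"
  unfolding bounded_ops_on_def id_on_def by (auto simp: L_add L_scale)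

lemma rank_one_ops_L: "a \<in> L \<Longrightarrow> b \<in> L \<Longrightarrow> (\<lambda>y. if y \<in> L then cinner y a *s b else 0) \<in> ops_L"
  unfolding bounded_ops_on_def
  by (auto simp: L_scale L_add cinner_add_left cinner_scale_left vector_sadd_rdistrib vector_smult_assoc)

definition op_matrix :: "(complex^'k \<Rightarrow> complex^'k) \<Rightarrow> complex^'k^'k" where
  "op_matrix T = (\<chi> a b. (T (Q *v axis b 1))$a)"

definition compression :: "complex^'k^'k \<Rightarrow> complex^'k \<Rightarrow> complex^'k" where
  "compression A = (\<lambda>x. if x \<in> L then Q *v (A *v x) else 0)"

lemma op_matrix_mv:
  assumes T: "T \<in> ops_L"
  shows "op_matrix T *v v = T (Q *v v)"
proof -
  have "T (Q *v v) = T (\<Sum>b\<in>UNIV. (v$b) *s (Q *v axis b 1))"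
    by (subst vec_axis_expand) (simp add: mv_sum mv_scale)
  also have "\<dots> = (\<Sum>b\<in>UNIV. T ((v$b) *s (Q *v axis b 1)))"
    by (rule ops_L_sum[OF T]) (simp add: L_scale Q_in)
  also have "\<dots> = (\<Sum>b\<in>UNIV. (v$b) *s T (Q *v axis b 1))"
    using ops_L_D(3)[OF T] Q_in by simp
  also have "\<dots> = op_matrix T *v v"
    by (simp add: op_matrix_def matrix_vector_mult_def vec_eq_iff sum_component mult.commute)
  finally show ?thesis by simp
qed

lemma op_matrix_eqI: "T \<in> ops_L \<Longrightarrow> (\<And>v. M *v v = T (Q *v v)) \<Longrightarrow> op_matrix T = M"
  by (simp add: matrix_eq op_matrix_mv)

lemma compression_ops_L: "compression A \<in> ops_L"
  unfolding bounded_ops_on_def compression_def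
  by (auto simp: Q_in L_add L_scale matrix_vector_right_distrib mv_scale)

lemma op_matrix_add: "op_matrix (\<lambda>x. T x + S x) = op_matrix T + op_matrix S"
  by (simp add: op_matrix_def vec_eq_iff)

lemma op_matrix_scale: "op_matrix (\<lambda>x. c *s T x) = cmat_smult c (op_matrix T)"
  by (simp add: op_matrix_def vec_eq_iff cmat_smult_def)

lemma op_matrix_id: "op_matrix (id_on L) = Q"
  by (rule op_matrix_eqI[OF id_on_ops_L]) (simp add: id_on_def Q_in)

lemma compression_add: "compression (A + B) = (\<lambda>x. compression A x + compression B x)"
  by (auto simp: compression_def matrix_vector_mult_add_rdistrib matrix_vector_right_distrib)

lemma compression_scale: "compression (cmat_smult c A) = (\<lambda>x. c *s compression A x)"
  by (auto simp: compression_def cmat_smult_mv mv_scale)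

lemma compression_one: "compression (mat 1) = id_on L"
  by (auto simp: compression_def id_on_def Q_fix)

lemma compression_Q: "compression Q = id_on L"
  by (auto simp: compression_def id_on_def Q_fix Q_Q_mv)

lemma compression_op_matrix: "T \<in> ops_L \<Longrightarrow> compression (op_matrix T) = T"
  by (auto simp: compression_def op_matrix_mv Q_fix ops_L_D)

lemma op_matrix_compression: "op_matrix (compression A) = Q ** A ** Q"
  by (rule op_matrix_eqI[OF compression_ops_L])
    (simp add: compression_def Q_in matrix_vector_mul_assoc matrix_mul_assoc)

lemma op_matrix_adjoint:
  assumes T: "T \<in> ops_L" and S: "S \<in> ops_L"
    and adj: "\<forall>x\<in>L. \<forall>y\<in>L. cinner (T x) y = cinner x (S y)" and w: "w \<in> L"
  shows "cadj (op_matrix T) *v w = S w"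
proof (rule vec_eq_cinner[symmetric])
  fix x
  have "cinner x (cadj (op_matrix T) *v w) = cinner (op_matrix T *v x) w"
    by (simp add: cinner_adj)
  also have "\<dots> = cinner (T (Q *v x)) w" by (simp add: op_matrix_mv[OF T])
  also have "\<dots> = cinner (Q *v x) (S w)" using adj Q_in w by blast
  also have "\<dots> = cinner x (S w)" using ops_L_D(1)[OF S w] by (simp add: Q_selfadj Q_fix)
  finally show "cinner x (S w) = cinner x (cadj (op_matrix T) *v w)" by simp
qed

lemma op_matrix_adjoint_mult:
  assumes T: "T \<in> ops_L" and S: "S \<in> ops_L" and ST: "S \<circ> T \<in> ops_L"
    and adj: "\<forall>x\<in>L. \<forall>y\<in>L. cinner (T x) y = cinner x (S y)"
  shows "op_matrix (S \<circ> T) = cadj (op_matrix T) ** op_matrix T"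
proof (rule op_matrix_eqI[OF ST])
  fix v
  have "(cadj (op_matrix T) ** op_matrix T) *v v = cadj (op_matrix T) *v T (Q *v v)"
    by (simp add: matrix_vector_mul_assoc[symmetric] op_matrix_mv[OF T])
  also have "\<dots> = S (T (Q *v v))" using op_matrix_adjoint[OF T S adj] ops_L_D(1)[OF T] Q_in by blast
  finally show "(cadj (op_matrix T) ** op_matrix T) *v v = (S \<circ> T) (Q *v v)" by simp
qed

definition restrict_state :: "(complex^'k^'k \<Rightarrow> complex) \<Rightarrow> (complex^'k \<Rightarrow> complex^'k) \<Rightarrow> complex" where
  "restrict_state \<omega> = (\<lambda>T. if T \<in> ops_L then \<omega> (op_matrix T) else 0)"

definition extend_state :: "((complex^'k \<Rightarrow> complex^'k) \<Rightarrow> complex) \<Rightarrow> complex^'k^'k \<Rightarrow> complex" where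
  "extend_state \<phi> = (\<lambda>A. \<phi> (compression A))"

lemma restrict_state_mem:
  assumes w: "\<omega> \<in> proj_face"
  shows "restrict_state \<omega> \<in> state_space_on L"
proof -
  have s: "is_state \<omega>" and q: "\<omega> Q = 1" using w by (auto simp: proj_face_def state_space_def)
  have l: "lin_functional \<omega>" and p: "pos_functional \<omega>" using s by (auto simp: is_state_iff)
  have "restrict_state \<omega> (S \<circ> T) \<in> \<real> \<and> 0 \<le> Re (restrict_state \<omega> (S \<circ> T))"
    if T: "T \<in> ops_L" and S: "S \<in> ops_L"
      and adj: "\<forall>x\<in>L. \<forall>y\<in>L. cinner (T x) y = cinner x (S y)" for T S
  proof (cases "S \<circ> T \<in> ops_L")
    case True
    then show ?thesis using p op_matrix_adjoint_mult[OF T S True adj]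
      unfolding pos_functional_def nonneg_complex_iff_Real restrict_state_def by simp
  qed (simp add: restrict_state_def)
  then show ?thesis
    unfolding state_space_on_def is_state_on_def
    by (auto simp: restrict_state_def ops_L_add ops_L_scale op_matrix_add op_matrix_scale
        lin_add[OF l] lin_smult[OF l] id_on_ops_L op_matrix_id q)
qed

lemma extend_state_mem:
  assumes ph: "\<phi> \<in> state_space_on L" and u: "u \<in> L" "norm u = 1"
  shows "extend_state \<phi> \<in> proj_face"
proof -
  have st: "is_state_on L \<phi>" using ph by (simp add: state_space_on_def)
  have l: "lin_functional (extend_state \<phi>)"
    using st compression_ops_L
    by (simp add: lin_functional_def extend_state_def is_state_on_def compression_add compression_scale)
  (* compression |x><x| = S \<circ> T with T = |u><Qx| and its adjoint S = |Qx><u| on L. *)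
  have "0 \<le> extend_state \<phi> (outer x x)" for x
  proof -
    define w where "w = Q *v x"
    have wL: "w \<in> L" by (simp add: w_def Q_in)
    define T where "T = (\<lambda>y. if y \<in> L then cinner y w *s u else 0)"
    define S where "S = (\<lambda>y. if y \<in> L then cinner y u *s w else 0)"
    have TL: "T \<in> ops_L" unfolding T_def by (rule rank_one_ops_L[OF wL u(1)])
    have SL: "S \<in> ops_L" unfolding S_def by (rule rank_one_ops_L[OF u(1) wL])
    have adj: "\<forall>y\<in>L. \<forall>y'\<in>L. cinner (T y) y' = cinner y (S y')"
      by (simp add: T_def S_def cinner_scale_left cinner_scale_right cinner_commute[of u])
    have "compression (outer x x) y = (S \<circ> T) y" for y
    proof (cases "y \<in> L")
      case True
      have "cinner y x = cinner y w"
        using True by (simp add: w_def Q_selfadj[symmetric] Q_fix)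
      then show ?thesis using True u
        by (simp add: compression_def outer_mv mv_scale T_def S_def L_scale cinner_scale_left w_def
            cinner_self)
    qed (simp add: compression_def T_def S_def L_zero)
    then have "compression (outer x x) = S \<circ> T" by (rule ext)
    then show ?thesis
      using st TL SL adj unfolding is_state_on_def extend_state_def nonneg_complex_iff_Real by metis
  qed
  then have "pos_functional (extend_state \<phi>)" using pos_iff_outer[OF l] by blast
  moreover have "extend_state \<phi> (mat 1) = 1" "extend_state \<phi> Q = 1"
    using st by (simp_all add: is_state_on_def extend_state_def compression_one compression_Q)
  ultimately show ?thesis using l by (simp add: proj_face_def state_space_def is_state_iff)
qed

lemma extend_restrict: "\<omega> \<in> proj_face \<Longrightarrow> extend_state (restrict_state \<omega>) = \<omega>"
  by (auto simp: extend_state_def restrict_state_def compression_ops_L op_matrix_compression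
      proj_face_compress)

lemma restrict_extend: "\<phi> \<in> state_space_on L \<Longrightarrow> restrict_state (extend_state \<phi>) = \<phi>"
  by (auto simp: extend_state_def restrict_state_def compression_op_matrix state_space_on_def
      is_state_on_def)

theorem proj_face_affinely_isomorphic:
  assumes u: "u \<in> L" "norm u = 1"
  shows "affinely_isomorphic proj_face (state_space_on L)"
  unfolding affinely_isomorphic_def
proof (intro exI conjI ballI)
  show "bij_betw restrict_state proj_face (state_space_on L)"
    by (rule bij_betw_byWitness[where f'=extend_state])
      (auto simp: extend_restrict restrict_extend restrict_state_mem extend_state_mem[OF _ u])
  fix x y and t :: real
  show "restrict_state ((1 - t) *\<^sub>R x + t *\<^sub>R y) = (1 - t) *\<^sub>R restrict_state x + t *\<^sub>R restrict_state y"
    by (auto simp: restrict_state_def)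
qed

end

lemma face_of_convex_combination:
  assumes G: "G face_of C" and x: "x \<in> G" and y: "y \<in> C" and z: "z \<in> C"
    and t: "0 < t" "t < 1" and x_eq: "x = (1 - t) *\<^sub>R y + t *\<^sub>R z"
  shows "z \<in> G"
proof (cases "y = z")
  case True
  then show ?thesis using x x_eq by simp
next
  case False
  then have "x \<in> open_segment y z" using t x_eq by (auto simp: in_segment)
  then show ?thesis using face_ofD[OF G _ y z x] by blast
qed

lemma face_generated_eqI:
  assumes "F face_of C" "X \<subseteq> F" "\<And>G. G face_of C \<Longrightarrow> X \<subseteq> G \<Longrightarrow> F \<subseteq> G"
  shows "face_generated X C = F"
  unfolding face_generated_def using assms by blast

lemma state_adj_real:
  assumes "is_state \<omega>"
  shows "\<omega> (cadj A ** A) = of_real (Re (\<omega> (cadj A ** A)))" "0 \<le> Re (\<omega> (cadj A ** A))"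
  using assms by (auto simp: is_state_iff pos_functional_def nonneg_complex_iff complex_eq_iff)

(* If omega \<le> D omega_0 on positive elements, then omega_0 is a proper convex combination
   of omega and another state sigma = (omega_0 - eps omega)/(1 - eps). *)
lemma dominated_state_split:
  assumes s0: "is_state \<omega>0" and s: "is_state \<omega>" and D: "0 \<le> D"
    and dom: "\<And>A. Re (\<omega> (cadj A ** A)) \<le> D * Re (\<omega>0 (cadj A ** A))"
  obtains \<epsilon> \<sigma> where "0 < \<epsilon>" "\<epsilon> < 1" "is_state \<sigma>" "\<omega>0 = (1 - \<epsilon>) *\<^sub>R \<sigma> + \<epsilon> *\<^sub>R \<omega>"
proof -
  define \<epsilon> :: real where "\<epsilon> = 1 / (D + 2)"
  have e0: "0 < \<epsilon>" and e1: "\<epsilon> < 1" and eD: "\<epsilon> * D \<le> 1"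
    using D by (auto simp: \<epsilon>_def field_simps)
  define \<sigma> where "\<sigma> = (1 / (1 - \<epsilon>)) *\<^sub>R \<omega>0 + (- (\<epsilon> / (1 - \<epsilon>))) *\<^sub>R \<omega>"
  have l: "lin_functional \<sigma>"
    unfolding \<sigma>_def by (rule lin_comb) (use s0 s in \<open>auto simp: is_state_iff\<close>)
  have "0 \<le> \<sigma> (cadj A ** A)" for A
  proof -
    define r0 where "r0 = Re (\<omega>0 (cadj A ** A))"
    define r where "r = Re (\<omega> (cadj A ** A))"
    have h0: "\<omega>0 (cadj A ** A) = of_real r0" unfolding r0_def by (rule state_adj_real(1)[OF s0])
    have h: "\<omega> (cadj A ** A) = of_real r" unfolding r_def by (rule state_adj_real(1)[OF s])
    have "\<sigma> (cadj A ** A) = of_real ((r0 - \<epsilon> * r) / (1 - \<epsilon>))"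
      using e1 by (simp add: \<sigma>_def h0 h scaleR_conv_of_real diff_divide_distrib)
    moreover have "\<epsilon> * r \<le> r0"
    proof -
      have "\<epsilon> * r \<le> \<epsilon> * (D * r0)" using dom[of A] e0 by (simp add: r_def r0_def)
      also have "\<dots> = (\<epsilon> * D) * r0" by simp
      also have "\<dots> \<le> r0"
        by (rule mult_left_le_one_le) (use eD e0 D state_adj_real(2)[OF s0, of A] in \<open>auto simp: r0_def\<close>)
      finally show ?thesis .
    qed
    ultimately show ?thesis using e1 by (simp add: nonneg_complex_iff)
  qed
  then have "pos_functional \<sigma>" by (simp add: pos_functional_def)
  moreover have "\<sigma> (mat 1) = 1"
    using s0 s e1 by (simp add: is_state_iff \<sigma>_def scaleR_conv_of_real field_simps)
  ultimately have "is_state \<sigma>" using l by (simp add: is_state_iff)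
  moreover have "\<omega>0 = (1 - \<epsilon>) *\<^sub>R \<sigma> + \<epsilon> *\<^sub>R \<omega>"
  proof -
    have a: "(1 - \<epsilon>) * (1 / (1 - \<epsilon>)) = 1" and b: "(1 - \<epsilon>) * (- (\<epsilon> / (1 - \<epsilon>))) = - \<epsilon>"
      using e1 by (auto simp: field_simps)
    show ?thesis unfolding \<sigma>_def scaleR_add_right scaleR_scaleR a b by simp
  qed
  ultimately show ?thesis using that e0 e1 by blast
qed

lemma tensor_add_right: "tensor x (y + y') = tensor x y + tensor x y'"
  by (simp add: tensor_def vec_eq_iff distrib_left)
lemma tensor_scale_right: "tensor x (c *s y) = c *s tensor x y"
  by (simp add: tensor_def vec_eq_iff mult_ac)
lemma tensor_scale_left: "tensor (c *s x) y = c *s tensor x y"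
  by (simp add: tensor_def vec_eq_iff mult_ac)
lemma tensor_zero_right: "tensor x 0 = 0"
  by (simp add: tensor_def vec_eq_iff)
lemma tensor_sum_right: "tensor x (sum g S) = (\<Sum>s\<in>S. tensor x (g s))"
  by (induction S rule: infinite_finite_induct) (auto simp: tensor_add_right tensor_zero_right)

lemma cinner_tensor: "cinner (tensor x y) (tensor x' y') = cinner x x' * cinner y y'"
proof -
  have "cinner (tensor x y) (tensor x' y') =
      (\<Sum>ij\<in>UNIV \<times> UNIV. x$(fst ij) * y$(snd ij) * cnj (x'$(fst ij) * y'$(snd ij)))"
    by (simp add: cinner_def tensor_def UNIV_Times_UNIV)
  also have "\<dots> = (\<Sum>i\<in>UNIV. \<Sum>j\<in>UNIV. (x$i * cnj (x'$i)) * (y$j * cnj (y'$j)))"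
    by (simp add: sum.cartesian_product case_prod_beta mult_ac)
  also have "\<dots> = cinner x x' * cinner y y'"
    by (simp add: cinner_def sum_product)
  finally show ?thesis .
qed

lemma norm_tensor: "norm (tensor x y) = norm x * norm y"
proof -
  have "(norm (tensor x y))\<^sup>2 = (norm x * norm y)\<^sup>2"
    using cinner_tensor[of x y x y] unfolding cinner_self power_mult_distrib
    by (metis of_real_eq_iff of_real_mult)
  then show ?thesis by (simp add: power2_eq_iff_nonneg)
qed

lemma cspan_csubspace: "csubspace (cspan S)"
  unfolding csubspace_def
proof (intro conjI ballI allI)
  show "0 \<in> cspan S" unfolding cspan_def by (rule CollectI, rule exI[of _ "{}"]) auto
next
  fix x y assume x: "x \<in> cspan S" and y: "y \<in> cspan S"
  obtain T1 c1 where 1: "x = (\<Sum>v\<in>T1. c1 v *s v)" "finite T1" "T1 \<subseteq> S"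
    using x by (auto simp: cspan_def)
  obtain T2 c2 where 2: "y = (\<Sum>v\<in>T2. c2 v *s v)" "finite T2" "T2 \<subseteq> S"
    using y by (auto simp: cspan_def)
  define c where "c v = (if v \<in> T1 then c1 v else 0) + (if v \<in> T2 then c2 v else 0)" for v
  have a: "(\<Sum>v\<in>T1 \<union> T2. (if v \<in> T1 then c1 v else 0) *s v) = x"
    unfolding 1 by (rule sum.mono_neutral_cong_right) (use 1 2 in auto)
  have b: "(\<Sum>v\<in>T1 \<union> T2. (if v \<in> T2 then c2 v else 0) *s v) = y"
    unfolding 2 by (rule sum.mono_neutral_cong_right) (use 1 2 in auto)
  have "x + y = (\<Sum>v\<in>T1 \<union> T2. c v *s v)"
    unfolding c_def vector_sadd_rdistrib sum.distrib a b ..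
  then show "x + y \<in> cspan S" using 1 2 unfolding cspan_def by blast
next
  fix a x assume x: "x \<in> cspan S"
  obtain T1 c1 where 1: "x = (\<Sum>v\<in>T1. c1 v *s v)" "finite T1" "T1 \<subseteq> S"
    using x by (auto simp: cspan_def)
  have "a *s x = (\<Sum>v\<in>T1. (a * c1 v) *s v)"
    unfolding 1 by (induction T1 rule: infinite_finite_induct)
      (auto simp: vector_add_ldistrib vector_smult_assoc)
  then show "a *s x \<in> cspan S" unfolding cspan_def
    by (intro CollectI exI[of _ T1] exI[of _ "\<lambda>v. a * c1 v"]) (use 1 in auto)
qed

lemma cspan_base: "v \<in> S \<Longrightarrow> v \<in> cspan S"
  unfolding cspan_def by (rule CollectI, rule exI[of _ "{v}"], rule exI[of _ "\<lambda>_. 1"]) simp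

lemma sep_states_subset: "(sep_states :: (complex^('m::finite \<times> 'n::finite)^('m \<times> 'n) \<Rightarrow> complex) set) \<subseteq> state_space"
  unfolding sep_states_def
proof (rule hull_minimal)
  show "{vstate (tensor (x::complex^'m) (y::complex^'n)) |x y. norm x = 1 \<and> norm y = 1} \<subseteq> state_space"
    by (auto simp: state_space_def norm_tensor intro!: vstate_state)
qed (rule convex_state_space)

(* A normalized sum of vector functionals is a convex combination of the vector states of
   the normalized vectors, with weights \<parallel>z\<parallel>\<^sup>2. *)
lemma vstate_sum_mem_convex:
  fixes C :: "(complex^'k::finite^'k \<Rightarrow> complex) set"
  assumes C: "convex C" and nz: "\<forall>z\<in>set zs. z \<noteq> 0"
    and un: "\<forall>z\<in>set zs. vstate (complex_of_real (1 / norm z) *s z) \<in> C"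
    and w: "(\<Sum>z\<leftarrow>zs. (norm z)\<^sup>2) = 1"
  shows "vstate_sum zs \<in> C"
proof -
  define a where "a j = (norm (zs!j))\<^sup>2" for j
  define y where "y j = vstate (complex_of_real (1 / norm (zs!j)) *s (zs!j))" for j
  have "(\<Sum>j\<in>{0..<length zs}. a j *\<^sub>R y j) \<in> C"
  proof (rule convex_sum[OF _ C])
    show "(\<Sum>j\<in>{0..<length zs}. a j) = 1" using w by (simp add: a_def sum_list_sum_nth)
    show "\<And>i. i \<in> {0..<length zs} \<Longrightarrow> 0 \<le> a i" by (simp add: a_def)
    show "\<And>i. i \<in> {0..<length zs} \<Longrightarrow> y i \<in> C" using un by (simp add: y_def)
  qed simp
  moreover have "a j *\<^sub>R y j M = vstate (zs!j) M" if j: "j < length zs" for j M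
  proof -
    define z where "z = zs!j"
    have "z \<noteq> 0" using nz j by (simp add: z_def)
    then have "z = complex_of_real (norm z) *s (complex_of_real (1 / norm z) *s z)"
      by (simp add: vector_smult_assoc flip: of_real_mult)
    then have "vstate z M = of_real ((norm z)\<^sup>2) * vstate (complex_of_real (1 / norm z) *s z) M"
      by (metis vstate_scale complex_cnj_complex_of_real power2_eq_square of_real_mult)
    then show ?thesis by (simp add: a_def y_def z_def scaleR_conv_of_real)
  qed
  then have "(\<Sum>j\<in>{0..<length zs}. a j *\<^sub>R y j) = vstate_sum zs"
    by (simp add: fun_eq_iff sum_fun_apply vstate_sum_def sum_list_sum_nth)
  ultimately show ?thesis by simp
qed

locale product_family =
  fixes e :: "nat \<Rightarrow> complex^'m::finite" and f :: "nat \<Rightarrow> complex^'n::finite" and p :: nat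
    and L :: "(complex^('m \<times> 'n)) set"
  assumes p_pos: "p \<ge> 1" and e_norm: "\<forall>i\<in>{1..p}. norm (e i) = 1"
    and f_norm: "\<forall>i\<in>{1..p}. norm (f i) = 1"
    and e_line: "\<forall>i\<in>{1..p}. cline (e i) = cline (e 1)"
    and L_eq: "L = {tensor (e 1) y | y. y \<in> cspan (f ` {1..p})}"
begin

definition gen :: "nat \<Rightarrow> complex^('m \<times> 'n)" where
  "gen i = tensor (e i) (f i)"

(* p times the value of the barycentre of the generators on A* A. *)
definition gen_weight :: "complex^('m \<times> 'n)^('m \<times> 'n) \<Rightarrow> real" where
  "gen_weight A = (\<Sum>i\<in>{1..p}. (norm (A *v gen i))\<^sup>2)"

lemma one_mem: "1 \<in> {1..p}"
  using p_pos by simp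

lemma e1_norm: "norm (e 1) = 1"
  using e_norm one_mem by blast

lemma e_phase:
  assumes i: "i \<in> {1..p}"
  obtains c where "e i = c *s e 1" "cmod c = 1"
proof -
  have "e i \<in> cline (e i)" unfolding cline_def by (rule range_eqI[of _ _ 1]) simp
  then have "e i \<in> cline (e 1)" using e_line i by blast
  then obtain c where c: "e i = c *s e 1" by (auto simp: cline_def)
  then have "cmod c = 1" using e_norm i e1_norm by (metis mult.right_neutral norm_cscale)
  then show ?thesis using c that by blast
qed

lemma L_csubspace: "csubspace L"
proof -
  have span: "csubspace (cspan (f ` {1..p}))" by (rule cspan_csubspace)
  show ?thesis
    unfolding csubspace_def L_eq
  proof (intro conjI ballI allI)
    show "0 \<in> {tensor (e 1) y |y. y \<in> cspan (f ` {1..p})}"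
      using span tensor_zero_right by (auto simp: csubspace_def)
  next
    fix x y assume "x \<in> {tensor (e 1) y |y. y \<in> cspan (f ` {1..p})}"
      "y \<in> {tensor (e 1) y |y. y \<in> cspan (f ` {1..p})}"
    then obtain a b where "x = tensor (e 1) a" "a \<in> cspan (f ` {1..p})"
      "y = tensor (e 1) b" "b \<in> cspan (f ` {1..p})" by auto
    then show "x + y \<in> {tensor (e 1) y |y. y \<in> cspan (f ` {1..p})}"
      using span by (auto simp: csubspace_def tensor_add_right[symmetric] intro!: exI[of _ "a + b"])
  next
    fix c x assume "x \<in> {tensor (e 1) y |y. y \<in> cspan (f ` {1..p})}"
    then obtain a where "x = tensor (e 1) a" "a \<in> cspan (f ` {1..p})" by auto
    then show "c *s x \<in> {tensor (e 1) y |y. y \<in> cspan (f ` {1..p})}"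
      using span by (auto simp: csubspace_def tensor_scale_right[symmetric] intro!: exI[of _ "c *s a"])
  qed
qed

lemma gen_in_L:
  assumes i: "i \<in> {1..p}"
  shows "gen i \<in> L"
proof -
  obtain c where c: "e i = c *s e 1" "cmod c = 1" using e_phase[OF i] by blast
  have "f i \<in> cspan (f ` {1..p})" using i by (intro cspan_base) simp
  then have "c *s f i \<in> cspan (f ` {1..p})"
    using cspan_csubspace[of "f ` {1..p}"] unfolding csubspace_def by blast
  moreover have "gen i = tensor (e 1) (c *s f i)"
    by (simp add: gen_def c tensor_scale_left tensor_scale_right)
  ultimately show ?thesis unfolding L_eq by blast
qed

lemma gen_norm: "i \<in> {1..p} \<Longrightarrow> norm (gen i) = 1"
  using e_norm f_norm by (simp add: gen_def norm_tensor)

lemma norm_mult_gen: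
  assumes i: "i \<in> {1..p}"
  shows "norm (A *v gen i) = norm (A *v tensor (e 1) (f i))"
proof -
  obtain c where c: "e i = c *s e 1" "cmod c = 1" using e_phase[OF i] by blast
  show ?thesis by (simp add: gen_def c tensor_scale_left mv_scale norm_cscale)
qed

lemma gen_weight_nonneg: "0 \<le> gen_weight A"
  by (simp add: gen_weight_def sum_nonneg)

(* Every vector z = e_1 \<otimes> \<Sum> c_v v of L satisfies \<parallel>A z\<parallel>\<^sup>2 \<le> B gen_weight A: by the triangle
   inequality \<parallel>A z\<parallel> \<le> (\<Sum> |c_v|) sqrt (gen_weight A). *)
lemma L_vector_dominated:
  assumes z: "z \<in> L"
  obtains B where "0 \<le> B" "\<And>A. (norm (A *v z))\<^sup>2 \<le> B * gen_weight A"
proof -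
  obtain y where y: "z = tensor (e 1) y" "y \<in> cspan (f ` {1..p})" using z by (auto simp: L_eq)
  obtain T c where Tc: "y = (\<Sum>v\<in>T. c v *s v)" "T \<subseteq> f ` {1..p}"
    using y(2) by (auto simp: cspan_def)
  define B0 where "B0 = (\<Sum>v\<in>T. cmod (c v))"
  have B0: "0 \<le> B0" by (simp add: B0_def sum_nonneg)
  have bound: "(norm (A *v z))\<^sup>2 \<le> B0\<^sup>2 * gen_weight A" for A
  proof -
    have vb: "norm (A *v tensor (e 1) v) \<le> sqrt (gen_weight A)" if v: "v \<in> T" for v
    proof -
      obtain i where i: "i \<in> {1..p}" "v = f i" using Tc(2) v by blast
      have "(norm (A *v gen i))\<^sup>2 \<le> gen_weight A"
        unfolding gen_weight_def by (rule member_le_sum[OF i(1)]) auto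
      then show ?thesis by (simp add: norm_mult_gen[OF i(1)] i(2) real_le_rsqrt)
    qed
    have "A *v z = (\<Sum>v\<in>T. c v *s (A *v tensor (e 1) v))"
      by (simp add: y(1) Tc(1) tensor_sum_right tensor_scale_right mv_sum mv_scale)
    then have "norm (A *v z) \<le> (\<Sum>v\<in>T. norm (c v *s (A *v tensor (e 1) v)))"
      by (simp only: norm_sum)
    also have "\<dots> = (\<Sum>v\<in>T. cmod (c v) * norm (A *v tensor (e 1) v))"
      by (simp add: norm_cscale)
    also have "\<dots> \<le> (\<Sum>v\<in>T. cmod (c v) * sqrt (gen_weight A))"
      by (intro sum_mono mult_left_mono vb) auto
    also have "\<dots> = B0 * sqrt (gen_weight A)" by (simp add: B0_def sum_distrib_right)
    finally have "(norm (A *v z))\<^sup>2 \<le> (B0 * sqrt (gen_weight A))\<^sup>2"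
      by (rule power_mono) simp
    also have "\<dots> = B0\<^sup>2 * gen_weight A" using gen_weight_nonneg by (simp add: power_mult_distrib)
    finally show ?thesis .
  qed
  show ?thesis by (rule that[of "B0\<^sup>2"]) (use bound in auto)
qed

lemma vstate_sum_dominated:
  "\<forall>z\<in>set zs. z \<in> L \<Longrightarrow> \<exists>C\<ge>0. \<forall>A. (\<Sum>z\<leftarrow>zs. (norm (A *v z))\<^sup>2) \<le> C * gen_weight A"
proof (induction zs)
  case (Cons z zs)
  then obtain C where C: "C \<ge> 0" "\<forall>A. (\<Sum>z\<leftarrow>zs. (norm (A *v z))\<^sup>2) \<le> C * gen_weight A"
    by auto
  have "z \<in> L" using Cons.prems by simp
  then obtain B where B: "B \<ge> 0" "\<And>A. (norm (A *v z))\<^sup>2 \<le> B * gen_weight A"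
    using L_vector_dominated by blast
  have "(\<Sum>z\<leftarrow>z # zs. (norm (A *v z))\<^sup>2) \<le> (B + C) * gen_weight A" for A
    using B(2)[of A] C(2) by (simp add: distrib_right add_mono)
  then show ?case using B C by (intro exI[of _ "B + C"]) auto
qed auto

end

locale product_family_projection = product_family e f p L + subspace_projection L Q
  for e :: "nat \<Rightarrow> complex^'m::finite" and f :: "nat \<Rightarrow> complex^'n::finite" and p L Q
begin

(* Every vector of L is a product vector, so F_Q consists of separable states. *)
lemma proj_face_subset_sep: "proj_face \<subseteq> sep_states"
proof
  fix \<omega> assume w: "\<omega> \<in> proj_face"
  obtain zs where zs: "\<forall>z\<in>set zs. z \<noteq> 0 \<and> z \<in> L" "\<omega> = vstate_sum zs"
    using proj_face_vstate_sum[OF w] by blast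
  have "complex_of_real (\<Sum>z\<leftarrow>zs. (norm z)\<^sup>2) = vstate_sum zs (mat 1)"
    by (simp only: vstate_sum_def vstate_one of_real_sum_list)
  also have "\<dots> = 1" using zs(2) proj_face_state[OF w] by (simp add: is_state_iff)
  finally have wsum: "(\<Sum>z\<leftarrow>zs. (norm z)\<^sup>2) = 1" by (metis of_real_eq_1_iff)
  have "vstate (complex_of_real (1 / norm z) *s z) \<in> sep_states" if z: "z \<in> set zs" for z
  proof -
    obtain y where y: "z = tensor (e 1) y" using zs(1) z by (auto simp: L_eq)
    have "norm y > 0" using zs(1) z y by (auto simp: tensor_zero_right)
    then have "norm (complex_of_real (1 / norm z) *s y) = 1"
      using e1_norm by (simp add: y norm_tensor norm_cscale norm_divide)
    moreover have "complex_of_real (1 / norm z) *s z = tensor (e 1) (complex_of_real (1 / norm z) *s y)"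
      by (simp add: y tensor_scale_right)
    ultimately have "vstate (complex_of_real (1 / norm z) *s z) \<in>
        {vstate (tensor (x::complex^'m) (y::complex^'n)) |x y. norm x = 1 \<and> norm y = 1}"
      using e1_norm
      by (intro CollectI exI[of _ "e 1"] exI[of _ "complex_of_real (1 / norm z) *s y"]) simp
    then show ?thesis unfolding sep_states_def by (rule hull_inc)
  qed
  then show "\<omega> \<in> sep_states"
    using zs wsum by (auto intro!: vstate_sum_mem_convex simp: sep_states_def convex_convex_hull)
qed

lemma gen_in_proj_face: "i \<in> {1..p} \<Longrightarrow> vstate (gen i) \<in> proj_face"
  using vstate_state[OF gen_norm] gen_in_L gen_norm
  by (simp add: proj_face_def state_space_def vstate_def Q_fix cinner_self)

definition barycentre :: "complex^('m \<times> 'n)^('m \<times> 'n) \<Rightarrow> complex" where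
  "barycentre = (\<Sum>i\<in>{1..p}. (1 / real p) *\<^sub>R vstate (gen i))"

lemma barycentre_mem: "convex G \<Longrightarrow> (\<And>i. i \<in> {1..p} \<Longrightarrow> vstate (gen i) \<in> G) \<Longrightarrow> barycentre \<in> G"
  unfolding barycentre_def using p_pos by (intro convex_sum) auto

lemma barycentre_adj: "barycentre (cadj A ** A) = of_real (gen_weight A / real p)"
  unfolding barycentre_def gen_weight_def sum_fun_apply scaleR_fun_apply
  by (simp add: vstate_adj scaleR_conv_of_real sum_divide_distrib del: of_real_power)

lemma proj_face_dominated:
  assumes w: "\<omega> \<in> proj_face"
  obtains D where "0 \<le> D" "\<And>A. Re (\<omega> (cadj A ** A)) \<le> D * Re (barycentre (cadj A ** A))"
proof -
  obtain zs where zs: "\<forall>z\<in>set zs. z \<noteq> 0 \<and> z \<in> L" "\<omega> = vstate_sum zs"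
    using proj_face_vstate_sum[OF w] by blast
  obtain C where C: "C \<ge> 0" "\<forall>A. (\<Sum>z\<leftarrow>zs. (norm (A *v z))\<^sup>2) \<le> C * gen_weight A"
    using vstate_sum_dominated zs(1) by blast
  have bound: "Re (\<omega> (cadj A ** A)) \<le> (C * real p) * Re (barycentre (cadj A ** A))" for A
    using C(2) p_pos by (simp add: zs(2) vstate_sum_adj barycentre_adj del: of_real_power)
  show ?thesis by (rule that[of "C * real p"]) (use C(1) bound in auto)
qed

(* Minimality: a face G of S containing the generators contains the barycentre, hence
   (by domination) every state of F_Q. *)
lemma proj_face_minimal:
  assumes G: "G face_of sep_states" and gens: "\<And>i. i \<in> {1..p} \<Longrightarrow> vstate (gen i) \<in> G"
  shows "proj_face \<subseteq> G"
proof
  fix \<omega> assume w: "\<omega> \<in> proj_face"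
  have b_G: "barycentre \<in> G" by (rule barycentre_mem[OF face_of_imp_convex[OF G] gens])
  have b_F: "barycentre \<in> proj_face"
    by (rule barycentre_mem[OF face_of_imp_convex[OF proj_face_face] gen_in_proj_face])
  obtain D where D: "0 \<le> D" "\<And>A. Re (\<omega> (cadj A ** A)) \<le> D * Re (barycentre (cadj A ** A))"
    using proj_face_dominated[OF w] by blast
  obtain \<epsilon> \<sigma> where e: "0 < \<epsilon>" "\<epsilon> < 1" and s: "is_state \<sigma>"
    and split: "barycentre = (1 - \<epsilon>) *\<^sub>R \<sigma> + \<epsilon> *\<^sub>R \<omega>"
    using dominated_state_split[OF proj_face_state[OF b_F] proj_face_state[OF w] D] by blast
  have "\<sigma> \<in> proj_face"
    by (rule face_of_convex_combination[OF proj_face_face b_F, of \<omega> \<sigma> "1 - \<epsilon>"])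
      (use w s e split in \<open>auto simp: proj_face_def state_space_def add.commute\<close>)
  then show "\<omega> \<in> G"
    using face_of_convex_combination[OF G b_G _ _ e split] proj_face_subset_sep w by blast
qed

end

theorem mainTheorem3:
  fixes e :: "nat \<Rightarrow> complex^'m::finite" and f :: "nat \<Rightarrow> complex^'n::finite" and p :: nat
  assumes "p \<ge> 1"
    and "\<forall>i\<in>{1..p}. norm (e i) = 1"
    and "\<forall>i\<in>{1..p}. norm (f i) = 1"
    and "\<forall>i\<in>{1..p}. cline (e i) = cline (e 1)"
  defines "K \<equiv> (state_space :: (complex^('m \<times> 'n)^('m \<times> 'n) \<Rightarrow> complex) set)"
    and "S \<equiv> (sep_states :: (complex^('m \<times> 'n)^('m \<times> 'n) \<Rightarrow> complex) set)"
    and "L \<equiv> {tensor (e 1) y | y. y \<in> cspan (f ` {1..p})}"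
  defines "F \<equiv> face_generated {vstate (tensor (e i) (f i)) | i. i \<in> {1..p}} S"
  shows "F face_of K \<and>
         (\<exists>Q. is_orth_proj Q L \<and> F = {\<omega> \<in> K. \<omega> Q = 1}) \<and>
         affinely_isomorphic F (state_space_on L)"
proof -
  have family: "product_family e f p L"
    unfolding product_family_def L_def using assms(1-4) by blast
  interpret product_family e f p L by (rule family)
  obtain Q where Q: "cadj Q = Q" "Q ** Q = Q" "\<And>v. Q *v v \<in> L" "\<And>v. v \<in> L \<Longrightarrow> Q *v v = v"
    using orthogonal_projection_exists[OF L_csubspace] by blast
  have "subspace_projection L Q"
    by unfold_locales (simp_all add: Q L_csubspace)
  with family interpret product_family_projection e f p L Q
    by (rule product_family_projection.intro)
  have gens: "{vstate (tensor (e i) (f i)) | i. i \<in> {1..p}} = vstate ` gen ` {1..p}"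
    unfolding gen_def by blast
  have F_eq: "F = proj_face"
    unfolding F_def S_def gens
  proof (rule face_generated_eqI)
    show "proj_face face_of sep_states"
      by (rule face_of_subset[OF proj_face_face proj_face_subset_sep sep_states_subset])
    show "vstate ` gen ` {1..p} \<subseteq> proj_face"
      using gen_in_proj_face by blast
    show "proj_face \<subseteq> G" if "G face_of sep_states" "vstate ` gen ` {1..p} \<subseteq> G" for G
      using proj_face_minimal[OF that(1)] that(2) by blast
  qed
  show ?thesis
  proof (intro conjI)
    show "F face_of K" unfolding F_eq K_def by (rule proj_face_face)
    show "\<exists>Q. is_orth_proj Q L \<and> F = {\<omega> \<in> K. \<omega> Q = 1}"
      using is_orth_proj by (auto simp: F_eq K_def proj_face_def)
    show "affinely_isomorphic F (state_space_on L)"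
      unfolding F_eq by (rule proj_face_affinely_isomorphic[OF gen_in_L[OF one_mem] gen_norm[OF one_mem]])
  qed
qed

end
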